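(* Let $\Phi(v_1,\dots,v_r)$ be an $\mathrm{st}$-prenex formula all of whose parameters are standard. Then (in SPOT) for every standard set $S$ there is a standard set $P$ such that for all standard $v_1,\dots,v_r$: $$\langle v_1,\dots,v_r\rangle\in P\iff \langle v_1,\dots,v_r\rangle\in S\wedge\Phi(v_1,\dots,v_r).$$
   Context: We work in the theory SPOT. Its language is the $\in$-language (membership together with the usual defined symbols of mathematics such as $\mathbb N,\mathbb R,<,+,\cdot$) enriched by a unary predicate $\mathrm{st}$ ("$x$ is standard"). An $\in$-formula is a formula not mentioning $\mathrm{st}$. $\forall^{\mathrm{st}}x$ and $\exists^{\mathrm{st}}x$ denote quantifiers restricted to standard sets. The axioms of SPOT are: ZF; Transfer: for every $\in$-formula $\varphi(x)$ all of whose parameters are standard, $\forall^{\mathrm{st}}x\,\varphi(x)\to\forall x\,\varphi(x)$; Nontriviality: $\exists \nu\in\mathbb N\,\forall^{\mathrm{st}}n\in\mathbb N\,(n\neq\nu)$; Standard Part: $\forall A\subseteq\mathbb N\,\exists^{\mathrm{st}}B\subseteq\mathbb N\,\forall^{\mathrm{st}}n\in\mathbb N\,(n\in B\iff n\in A)$. An $\mathrm{st}$-prenex formula is one of the form $\mathsf Q^{\mathrm{st}}u_1\cdots\mathsf Q^{\mathrm{st}}u_s\,\psi(u_1,\dots,u_s,v_1,\dots,v_r)$ where $\psi$ is an $\in$-formula and each $\mathsf Q^{\mathrm{st}}$ is $\forall^{\mathrm{st}}$ or $\exists^{\mathrm{st}}$ (all quantifiers over standard sets precede all ordinary quantifiers).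 *)

theory Defs
  imports Main
begin

text \<open>Deep embedding of the language of SPOT: the \<in>-language (with equality)
  enriched by the unary predicate st. Variables are natural numbers; a model is a
  type 'a with a membership relation mem (mem x y means x \<in> y) and a predicate st.
  The usual defined symbols of mathematics are eliminable abbreviations, so
  \<in>-formulas are built from membership and equality only.\<close>

datatype form =
    FMem nat nat
  | FEq nat nat
  | FSt nat
  | FNeg form
  | FAnd form form
  | FEx nat form

primrec sat :: "('a \<Rightarrow> 'a \<Rightarrow> bool) \<Rightarrow> ('a \<Rightarrow> bool) \<Rightarrow> (nat \<Rightarrow> 'a) \<Rightarrow> form \<Rightarrow> bool" where
  "sat mem st e (FMem x y) = mem (e x) (e y)"
| "sat mem st e (FEq x y) = (e x = e y)"
| "sat mem st e (FSt x) = st (e x)"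
| "sat mem st e (FNeg p) = (\<not> sat mem st e p)"
| "sat mem st e (FAnd p q) = (sat mem st e p \<and> sat mem st e q)"
| "sat mem st e (FEx x p) = (\<exists>a. sat mem st (e(x := a)) p)"

primrec fv :: "form \<Rightarrow> nat set" where
  "fv (FMem x y) = {x, y}"
| "fv (FEq x y) = {x, y}"
| "fv (FSt x) = {x}"
| "fv (FNeg p) = fv p"
| "fv (FAnd p q) = fv p \<union> fv q"
| "fv (FEx x p) = fv p - {x}"

primrec in_form :: "form \<Rightarrow> bool" where
  "in_form (FMem x y) = True"
| "in_form (FEq x y) = True"
| "in_form (FSt x) = False"
| "in_form (FNeg p) = in_form p"
| "in_form (FAnd p q) = (in_form p \<and> in_form q)"
| "in_form (FEx x p) = in_form p"

text \<open>st-prenex formulas: a prefix of standard quantifiers (True = forall-st, False = exists-st,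
  together with the bound variable) followed by an \<in>-formula.\<close>
fun sat_pre :: "('a \<Rightarrow> 'a \<Rightarrow> bool) \<Rightarrow> ('a \<Rightarrow> bool) \<Rightarrow> (nat \<Rightarrow> 'a) \<Rightarrow> (bool \<times> nat) list \<Rightarrow> form \<Rightarrow> bool" where
  "sat_pre mem st e [] psi = sat mem st e psi"
| "sat_pre mem st e ((True, u) # qs) psi = (\<forall>a. st a \<longrightarrow> sat_pre mem st (e(u := a)) qs psi)"
| "sat_pre mem st e ((False, u) # qs) psi = (\<exists>a. st a \<and> sat_pre mem st (e(u := a)) qs psi)"

definition fv_pre :: "(bool \<times> nat) list \<Rightarrow> form \<Rightarrow> nat set" where
  "fv_pre qs psi = fv psi - set (map snd qs)"

definition is_empty :: "('a \<Rightarrow> 'a \<Rightarrow> bool) \<Rightarrow> 'a \<Rightarrow> bool" where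
  "is_empty mem e \<longleftrightarrow> (\<forall>x. \<not> mem x e)"

definition is_succ :: "('a \<Rightarrow> 'a \<Rightarrow> bool) \<Rightarrow> 'a \<Rightarrow> 'a \<Rightarrow> bool" where
  "is_succ mem s y \<longleftrightarrow> (\<forall>x. mem x s \<longleftrightarrow> mem x y \<or> x = y)"

definition is_inductive :: "('a \<Rightarrow> 'a \<Rightarrow> bool) \<Rightarrow> 'a \<Rightarrow> bool" where
  "is_inductive mem w \<longleftrightarrow>
     (\<exists>e. mem e w \<and> is_empty mem e) \<and> (\<forall>y. mem y w \<longrightarrow> (\<exists>s. mem s w \<and> is_succ mem s y))"

definition is_omega :: "('a \<Rightarrow> 'a \<Rightarrow> bool) \<Rightarrow> 'a \<Rightarrow> bool" where
  "is_omega mem w \<longleftrightarrow> is_inductive mem w \<and>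
     (\<forall>v. is_inductive mem v \<longrightarrow> (\<forall>x. mem x w \<longrightarrow> mem x v))"

definition subset_of :: "('a \<Rightarrow> 'a \<Rightarrow> bool) \<Rightarrow> 'a \<Rightarrow> 'a \<Rightarrow> bool" where
  "subset_of mem a b \<longleftrightarrow> (\<forall>x. mem x a \<longrightarrow> mem x b)"

definition is_pair :: "('a \<Rightarrow> 'a \<Rightarrow> bool) \<Rightarrow> 'a \<Rightarrow> 'a \<Rightarrow> 'a \<Rightarrow> bool" where
  "is_pair mem p a b \<longleftrightarrow>
     (\<forall>z. mem z p \<longleftrightarrow> ((\<forall>w. mem w z \<longleftrightarrow> w = a) \<or> (\<forall>w. mem w z \<longleftrightarrow> w = a \<or> w = b)))"

fun is_tuple :: "('a \<Rightarrow> 'a \<Rightarrow> bool) \<Rightarrow> 'a \<Rightarrow> 'a list \<Rightarrow> bool" where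
  "is_tuple mem t [] = False"
| "is_tuple mem t [a] = (t = a)"
| "is_tuple mem t (a # b # cs) = (\<exists>q. is_tuple mem q (b # cs) \<and> is_pair mem t a q)"

definition env_upd :: "(nat \<Rightarrow> 'a) \<Rightarrow> nat list \<Rightarrow> 'a list \<Rightarrow> nat \<Rightarrow> 'a" where
  "env_upd e vs vals = fold (\<lambda>(v, a) e'. e'(v := a)) (zip vs vals) e"

definition ZF :: "('a \<Rightarrow> 'a \<Rightarrow> bool) \<Rightarrow> bool" where
  "ZF mem \<longleftrightarrow>
     (\<forall>a b. (\<forall>x. mem x a \<longleftrightarrow> mem x b) \<longrightarrow> a = b) \<and>
     (\<forall>a. (\<exists>x. mem x a) \<longrightarrow> (\<exists>x. mem x a \<and> \<not> (\<exists>y. mem y x \<and> mem y a))) \<and>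
     (\<forall>a b. \<exists>c. mem a c \<and> mem b c) \<and>
     (\<forall>a. \<exists>u. \<forall>x y. mem x y \<and> mem y a \<longrightarrow> mem x u) \<and>
     (\<forall>a. \<exists>p. \<forall>z. subset_of mem z a \<longrightarrow> mem z p) \<and>
     (\<exists>w. is_inductive mem w) \<and>
     (\<forall>phi x e a. in_form phi \<longrightarrow>
        (\<exists>b. \<forall>z. mem z b \<longleftrightarrow> mem z a \<and> sat mem (\<lambda>_. False) (e(x := z)) phi)) \<and>
     (\<forall>phi x y e a. in_form phi \<longrightarrow> x \<noteq> y \<longrightarrow>
        (\<forall>z. mem z a \<longrightarrow> (\<exists>!w. sat mem (\<lambda>_. False) (e(x := z, y := w)) phi)) \<longrightarrow>
        (\<exists>b. \<forall>w. mem w b \<longleftrightarrow> (\<exists>z. mem z a \<and> sat mem (\<lambda>_. False) (e(x := z, y := w)) phi)))"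

definition Transfer :: "('a \<Rightarrow> 'a \<Rightarrow> bool) \<Rightarrow> ('a \<Rightarrow> bool) \<Rightarrow> bool" where
  "Transfer mem st \<longleftrightarrow>
     (\<forall>phi x e. in_form phi \<longrightarrow> (\<forall>y\<in>fv phi - {x}. st (e y)) \<longrightarrow>
        (\<forall>a. st a \<longrightarrow> sat mem st (e(x := a)) phi) \<longrightarrow> (\<forall>a. sat mem st (e(x := a)) phi))"

definition Nontriviality :: "('a \<Rightarrow> 'a \<Rightarrow> bool) \<Rightarrow> ('a \<Rightarrow> bool) \<Rightarrow> bool" where
  "Nontriviality mem st \<longleftrightarrow>
     (\<forall>w. is_omega mem w \<longrightarrow> (\<exists>\<nu>. mem \<nu> w \<and> (\<forall>n. st n \<and> mem n w \<longrightarrow> n \<noteq> \<nu>)))"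

definition Standard_Part :: "('a \<Rightarrow> 'a \<Rightarrow> bool) \<Rightarrow> ('a \<Rightarrow> bool) \<Rightarrow> bool" where
  "Standard_Part mem st \<longleftrightarrow>
     (\<forall>w. is_omega mem w \<longrightarrow>
        (\<forall>A. subset_of mem A w \<longrightarrow>
           (\<exists>B. st B \<and> subset_of mem B w \<and>
              (\<forall>n. st n \<and> mem n w \<longrightarrow> (mem n B \<longleftrightarrow> mem n A)))))"

definition SPOT :: "('a \<Rightarrow> 'a \<Rightarrow> bool) \<Rightarrow> ('a \<Rightarrow> bool) \<Rightarrow> bool" where
  "SPOT mem st \<longleftrightarrow> ZF mem \<and> Transfer mem st \<and> Nontriviality mem st \<and> Standard_Part mem st"

end

theory Submission
  imports Defs
begin

text \<open>By Transfer, each standard quantifier of \<Phi> may be replaced by an ordinary one as long as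
  all free variables take standard values; so on standard tuples \<Phi> agrees with the \<in>-formula
  \<theta> obtained by erasing the st-relativisations. Separation provides the set of all t \<in> S that
  are tuples \<langle>v1,\<dots>,vr\<rangle> satisfying \<theta>. The statement "P is this set" is an \<in>-formula in P
  whose other parameters (S and those of \<theta>) are standard, so Transfer produces a standard such P.\<close>

definition FOr :: "form \<Rightarrow> form \<Rightarrow> form" where
  "FOr p q = FNeg (FAnd (FNeg p) (FNeg q))"

definition FAll :: "nat \<Rightarrow> form \<Rightarrow> form" where
  "FAll x p = FNeg (FEx x (FNeg p))"

definition FIff :: "form \<Rightarrow> form \<Rightarrow> form" where
  "FIff p q = FAnd (FOr (FNeg p) q) (FOr (FNeg q) p)"

lemma sat_FOr [simp]: "sat mem st e (FOr p q) = (sat mem st e p \<or> sat mem st e q)"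
  by (simp add: FOr_def)

lemma sat_FAll [simp]: "sat mem st e (FAll x p) = (\<forall>a. sat mem st (e(x := a)) p)"
  by (simp add: FAll_def)

lemma sat_FIff [simp]: "sat mem st e (FIff p q) = (sat mem st e p \<longleftrightarrow> sat mem st e q)"
  by (auto simp add: FIff_def)

lemma fv_FOr [simp]: "fv (FOr p q) = fv p \<union> fv q"
  by (simp add: FOr_def)

lemma fv_FAll [simp]: "fv (FAll x p) = fv p - {x}"
  by (simp add: FAll_def)

lemma fv_FIff [simp]: "fv (FIff p q) = fv p \<union> fv q"
  by (auto simp add: FIff_def)

lemma in_form_FOr [simp]: "in_form (FOr p q) = (in_form p \<and> in_form q)"
  by (simp add: FOr_def)

lemma in_form_FAll [simp]: "in_form (FAll x p) = in_form p"
  by (simp add: FAll_def)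

lemma in_form_FIff [simp]: "in_form (FIff p q) = (in_form p \<and> in_form q)"
  by (auto simp add: FIff_def)

lemma sat_cong: "\<forall>x\<in>fv p. e x = e' x \<Longrightarrow> sat mem st e p = sat mem st e' p"
proof (induction p arbitrary: e e')
  case (FAnd p q)
  then show ?case by (metis UnI1 UnI2 fv.simps(5) sat.simps(5))
next
  case (FEx x p)
  have "sat mem st (e(x := a)) p = sat mem st (e'(x := a)) p" for a
    using FEx by (intro FEx.IH) auto
  then show ?case by simp
qed auto

lemma sat_in_form_st_indep: "in_form p \<Longrightarrow> sat mem st e p = sat mem st' e p"
  by (induction p arbitrary: e) auto

lemma finite_fv: "finite (fv p)"
  by (induction p) auto

lemma Transfer_forall:
  assumes "Transfer mem st" "in_form phi" "\<forall>y\<in>fv phi - {x}. st (e y)"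
  shows "(\<forall>a. st a \<longrightarrow> sat mem st (e(x := a)) phi) \<longleftrightarrow> (\<forall>a. sat mem st (e(x := a)) phi)"
  using assms unfolding Transfer_def by blast

lemma Transfer_exists:
  assumes "Transfer mem st" "in_form phi" "\<forall>y\<in>fv phi - {x}. st (e y)"
  shows "(\<exists>a. st a \<and> sat mem st (e(x := a)) phi) \<longleftrightarrow> (\<exists>a. sat mem st (e(x := a)) phi)"
proof -
  have "(\<forall>a. st a \<longrightarrow> sat mem st (e(x := a)) (FNeg phi)) \<longleftrightarrow> (\<forall>a. sat mem st (e(x := a)) (FNeg phi))"
    by (rule Transfer_forall) (use assms in auto)
  then show ?thesis by auto
qed

fun erase_st :: "(bool \<times> nat) list \<Rightarrow> form \<Rightarrow> form" where
  "erase_st [] psi = psi"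
| "erase_st ((True, u) # qs) psi = FAll u (erase_st qs psi)"
| "erase_st ((False, u) # qs) psi = FEx u (erase_st qs psi)"

lemma fv_pre_Cons [simp]: "fv_pre ((b, u) # qs) psi = fv_pre qs psi - {u}"
  by (auto simp: fv_pre_def)

lemma fv_erase_st: "fv (erase_st qs psi) = fv_pre qs psi"
  by (induction qs psi rule: erase_st.induct) (auto simp: fv_pre_def)

lemma in_form_erase_st: "in_form psi \<Longrightarrow> in_form (erase_st qs psi)"
  by (induction qs psi rule: erase_st.induct) auto

lemma sat_pre_eq_sat_erase_st:
  assumes T: "Transfer mem st" and psi: "in_form psi"
    and "\<forall>x\<in>fv_pre qs psi. st (e x)"
  shows "sat_pre mem st e qs psi = sat mem st e (erase_st qs psi)"
  using psi assms(3)
proof (induction qs psi arbitrary: e rule: erase_st.induct)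
  case (2 u qs psi)
  have IH: "sat_pre mem st (e(u := a)) qs psi = sat mem st (e(u := a)) (erase_st qs psi)"
    if "st a" for a
    using "2.prems" that by (intro "2.IH") auto
  have "sat_pre mem st e ((True, u) # qs) psi = (\<forall>a. st a \<longrightarrow> sat mem st (e(u := a)) (erase_st qs psi))"
    using IH by auto
  also have "\<dots> = (\<forall>a. sat mem st (e(u := a)) (erase_st qs psi))"
    by (rule Transfer_forall) (use T in_form_erase_st "2.prems" in \<open>auto simp: fv_erase_st\<close>)
  finally show ?case by simp
next
  case (3 u qs psi)
  have IH: "sat_pre mem st (e(u := a)) qs psi = sat mem st (e(u := a)) (erase_st qs psi)"
    if "st a" for a
    using "3.prems" that by (intro "3.IH") auto
  have "sat_pre mem st e ((False, u) # qs) psi = (\<exists>a. st a \<and> sat mem st (e(u := a)) (erase_st qs psi))"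
    using IH by auto
  also have "\<dots> = (\<exists>a. sat mem st (e(u := a)) (erase_st qs psi))"
    by (rule Transfer_exists) (use T in_form_erase_st "3.prems" in \<open>auto simp: fv_erase_st\<close>)
  finally show ?case by simp
qed simp

lemma env_upd_Cons: "env_upd e (v # vs) (a # as) = env_upd (e(v := a)) vs as"
  by (simp add: env_upd_def)

lemma env_upd_notin: "x \<notin> set vs \<Longrightarrow> env_upd e vs vals x = e x"
proof (induction vs arbitrary: e vals)
  case (Cons v vs)
  then show ?case by (cases vals) (auto simp: env_upd_def)
qed (simp add: env_upd_def)

lemma env_upd_in_set:
  "length vals = length vs \<Longrightarrow> x \<in> set vs \<Longrightarrow> env_upd e vs vals x \<in> set vals"
proof (induction vs arbitrary: e vals)
  case (Cons v vs)
  then obtain a as where "vals = a # as" by (cases vals) auto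
  with Cons show ?case
    by (cases "x \<in> set vs") (simp_all add: env_upd_Cons env_upd_notin)
qed simp

lemma map_env_upd: "distinct vs \<Longrightarrow> length vals = length vs \<Longrightarrow> map (env_upd e vs vals) vs = vals"
proof (induction vs arbitrary: e vals)
  case (Cons v vs)
  then obtain a as where "vals = a # as" by (cases vals) auto
  with Cons show ?case by (simp add: env_upd_Cons env_upd_notin)
qed simp

lemma env_upd_fun_upd_commute:
  "z \<notin> set vs \<Longrightarrow> env_upd (e(z := t)) vs vals = (env_upd e vs vals)(z := t)"
proof (induction vs arbitrary: e vals)
  case (Cons v vs)
  show ?case
  proof (cases vals)
    case vals: (Cons a as)
    have "env_upd (e(z := t)) (v # vs) (a # as) = env_upd (e(v := a, z := t)) vs as"
      using Cons.prems by (simp add: env_upd_Cons fun_upd_twist)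
    also have "\<dots> = (env_upd (e(v := a)) vs as)(z := t)"
      by (rule Cons.IH) (use Cons.prems in simp)
    also have "\<dots> = (env_upd e (v # vs) (a # as))(z := t)"
      by (simp only: env_upd_Cons)
    finally show ?thesis by (simp only: vals)
  qed (simp add: env_upd_def)
qed (simp add: env_upd_def)

lemma st_env_upd:
  assumes "\<forall>x\<in>A - set vs. st (e x)" and "\<forall>a\<in>set vals. st a" and "length vals = length vs"
  shows "\<forall>x\<in>A. st (env_upd e vs vals x)"
  using assms env_upd_in_set[OF assms(3)] env_upd_notin by (metis DiffI)

fun FExs :: "nat list \<Rightarrow> form \<Rightarrow> form" where
  "FExs [] p = p"
| "FExs (v # vs) p = FEx v (FExs vs p)"

lemma sat_FExs:
  "sat mem st e (FExs vs p) = (\<exists>vals. length vals = length vs \<and> sat mem st (env_upd e vs vals) p)"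
proof (induction vs arbitrary: e)
  case Nil
  show ?case by (simp add: env_upd_def)
next
  case (Cons v vs)
  have "sat mem st e (FExs (v # vs) p) = (\<exists>a. sat mem st (e(v := a)) (FExs vs p))"
    by simp
  also have "\<dots> = (\<exists>a as. length as = length vs \<and> sat mem st (env_upd e (v # vs) (a # as)) p)"
    by (simp only: Cons.IH env_upd_Cons)
  also have "\<dots> = (\<exists>vals. length vals = length (v # vs) \<and> sat mem st (env_upd e (v # vs) vals) p)"
    by (metis length_Suc_conv)
  finally show ?case .
qed

lemma fv_FExs [simp]: "fv (FExs vs p) = fv p - set vs"
  by (induction vs) auto

lemma in_form_FExs [simp]: "in_form (FExs vs p) = in_form p"
  by (induction vs) auto

subsection \<open>Defining tuples by \<in>-formulas\<close>

text \<open>The variables n and Suc n are used as bound variables; they must exceed p, a, b.\<close>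
definition FPair :: "nat \<Rightarrow> nat \<Rightarrow> nat \<Rightarrow> nat \<Rightarrow> form" where
  "FPair p a b n = FAll n (FIff (FMem n p)
     (FOr (FAll (Suc n) (FIff (FMem (Suc n) n) (FEq (Suc n) a)))
          (FAll (Suc n) (FIff (FMem (Suc n) n) (FOr (FEq (Suc n) a) (FEq (Suc n) b))))))"

lemma sat_FPair:
  "p < n \<Longrightarrow> a < n \<Longrightarrow> b < n \<Longrightarrow> sat mem st e (FPair p a b n) = is_pair mem (e p) (e a) (e b)"
  by (simp add: FPair_def is_pair_def)

lemma fv_FPair: "fv (FPair p a b n) \<subseteq> {p, a, b}"
  by (auto simp: FPair_def)

lemma in_form_FPair [simp]: "in_form (FPair p a b n)"
  by (simp add: FPair_def)

text \<open>The variables k, Suc k, ... serve as bound variables. As with is_tuple, there is no empty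
  tuple.\<close>
fun FTuple :: "nat \<Rightarrow> nat list \<Rightarrow> nat \<Rightarrow> form" where
  "FTuple z [] k = FNeg (FEq z z)"
| "FTuple z [v] k = FEq z v"
| "FTuple z (v # w # ws) k = FEx k (FAnd (FTuple k (w # ws) (Suc k)) (FPair z v k (Suc k)))"

lemma sat_FTuple:
  "z < k \<Longrightarrow> \<forall>v\<in>set vs. v < k \<Longrightarrow> sat mem st e (FTuple z vs k) = is_tuple mem (e z) (map e vs)"
proof (induction z vs k arbitrary: e rule: FTuple.induct)
  case (3 z v w ws k)
  have map_eq: "map (e(k := q)) (w # ws) = map e (w # ws)" for q
    using "3.prems" by auto
  have "sat mem st (e(k := q)) (FTuple k (w # ws) (Suc k))
      = is_tuple mem ((e(k := q)) k) (map (e(k := q)) (w # ws))" for q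
    by (rule "3.IH") (use "3.prems" in auto)
  then have "sat mem st (e(k := q)) (FTuple k (w # ws) (Suc k)) = is_tuple mem q (map e (w # ws))"
    for q
    by (simp only: map_eq fun_upd_same)
  then show ?case
    using "3.prems" by (simp add: sat_FPair)
qed auto

lemma fv_FTuple: "fv (FTuple z vs k) \<subseteq> insert z (set vs)"
proof (induction z vs k rule: FTuple.induct)
  case (3 z v w ws k)
  then show ?case using fv_FPair[of z v k "Suc k"] by auto
qed auto

lemma in_form_FTuple [simp]: "in_form (FTuple z vs k)"
  by (induction z vs k rule: FTuple.induct) auto

lemma ex_tuple_form:
  assumes "distinct vs"
  obtains z phi where "in_form phi = in_form th" and "fv phi \<subseteq> insert z (fv th - set vs)"
    and "\<And>e t. sat mem st (e(z := t)) phi \<longleftrightarrow>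
      (\<exists>vals. length vals = length vs \<and> is_tuple mem t vals \<and> sat mem st (env_upd e vs vals) th)"
proof -
  obtain z where z: "\<forall>x\<in>fv th \<union> set vs. x < z"
    using finite_nat_set_iff_bounded[of "fv th \<union> set vs"] finite_fv by auto
  then have z_fresh: "z \<notin> set vs" "z \<notin> fv th" and vs_below: "\<forall>v\<in>set vs. v < Suc z"
    by (auto simp: less_Suc_eq)
  define phi where "phi = FExs vs (FAnd (FTuple z vs (Suc z)) th)"
  have "sat mem st (e(z := t)) phi \<longleftrightarrow>
      (\<exists>vals. length vals = length vs \<and> is_tuple mem t vals \<and> sat mem st (env_upd e vs vals) th)"
    for e t
  proof -
    have tuple: "sat mem st ((env_upd e vs vals)(z := t)) (FTuple z vs (Suc z)) = is_tuple mem t vals"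
      if "length vals = length vs" for vals
    proof -
      have "sat mem st ((env_upd e vs vals)(z := t)) (FTuple z vs (Suc z))
          = is_tuple mem t (map ((env_upd e vs vals)(z := t)) vs)"
        by (simp only: sat_FTuple[OF lessI vs_below] fun_upd_same)
      also have "map ((env_upd e vs vals)(z := t)) vs = vals"
        using z_fresh map_env_upd[OF assms that] by simp
      finally show ?thesis .
    qed
    have theta: "sat mem st ((env_upd e vs vals)(z := t)) th = sat mem st (env_upd e vs vals) th"
      for vals
      using z_fresh by (intro sat_cong) auto
    have "sat mem st (e(z := t)) phi \<longleftrightarrow> (\<exists>vals. length vals = length vs \<and>
        sat mem st ((env_upd e vs vals)(z := t)) (FAnd (FTuple z vs (Suc z)) th))"
      by (simp only: phi_def sat_FExs env_upd_fun_upd_commute[OF z_fresh(1)])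
    then show ?thesis
      using tuple theta by auto
  qed
  moreover have "fv phi \<subseteq> insert z (fv th - set vs)"
    using fv_FTuple[of z vs "Suc z"] by (auto simp: phi_def)
  ultimately show ?thesis
    using that[of phi z] by (simp add: phi_def)
qed

definition has_upairs :: "('a \<Rightarrow> 'a \<Rightarrow> bool) \<Rightarrow> bool" where
  "has_upairs mem \<longleftrightarrow> (\<forall>a b. \<exists>c. \<forall>w. mem w c \<longleftrightarrow> w = a \<or> w = b)"

lemma is_pair_inj:
  assumes "has_upairs mem" and p1: "is_pair mem p a b" and p2: "is_pair mem p c d"
  shows "a = c \<and> b = d"
proof -
  obtain z1 where z1: "\<forall>w. mem w z1 \<longleftrightarrow> w = a" using assms(1) unfolding has_upairs_def by metis
  obtain z2 where z2: "\<forall>w. mem w z2 \<longleftrightarrow> w = a \<or> w = b" using assms(1) unfolding has_upairs_def by metis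
  obtain z3 where z3: "\<forall>w. mem w z3 \<longleftrightarrow> w = c \<or> w = d" using assms(1) unfolding has_upairs_def by metis
  have "mem z1 p" "mem z2 p" "mem z3 p"
    using p1 p2 z1 z2 z3 unfolding is_pair_def by blast+
  then have "a = c"
    and "(\<forall>w. mem w z2 \<longleftrightarrow> w = c) \<or> (\<forall>w. mem w z2 \<longleftrightarrow> w = c \<or> w = d)"
    and "(\<forall>w. mem w z3 \<longleftrightarrow> w = a) \<or> (\<forall>w. mem w z3 \<longleftrightarrow> w = a \<or> w = b)"
    using p1 p2 z1 unfolding is_pair_def by metis+
  then show ?thesis using z2 z3 by metis
qed

lemma is_tuple_inj:
  assumes "has_upairs mem"
  shows "is_tuple mem t xs \<Longrightarrow> is_tuple mem t ys \<Longrightarrow> length xs = length ys \<Longrightarrow> xs = ys"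
  using assms
proof (induction mem t xs arbitrary: ys rule: is_tuple.induct)
  case (2 mem t a)
  then show ?case by (cases ys) auto
next
  case (3 mem t a b cs)
  then obtain a' b' cs' where ys: "ys = a' # b' # cs'"
    by (metis Suc_length_conv length_Cons)
  obtain q q' where q: "is_tuple mem q (b # cs)" "is_pair mem t a q"
    and q': "is_tuple mem q' (b' # cs')" "is_pair mem t a' q'"
    using "3.prems" ys by auto
  have "a = a'" "q = q'"
    using is_pair_inj[OF "3.prems"(4) q(2) q'(2)] by simp_all
  moreover have "b # cs = b' # cs'"
    using "3.IH"[OF q(1) _ _ "3.prems"(4)] q'(1) "3.prems"(3) ys \<open>q = q'\<close> by simp
  ultimately show ?case
    using ys by simp
qed simp

subsection \<open>Standardization of internal separation\<close>

lemma ZF_separation: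
  assumes "ZF mem" and "in_form phi"
  shows "\<exists>b. \<forall>z. mem z b \<longleftrightarrow> mem z a \<and> sat mem st (e(x := z)) phi"
proof -
  have "\<exists>b. \<forall>z. mem z b \<longleftrightarrow> mem z a \<and> sat mem (\<lambda>_. False) (e(x := z)) phi"
    using assms unfolding ZF_def by blast
  then show ?thesis
    using sat_in_form_st_indep[OF assms(2), of mem "\<lambda>_. False"] by metis
qed

lemma ZF_has_upairs:
  assumes Z: "ZF mem"
  shows "has_upairs mem"
  unfolding has_upairs_def
proof (intro allI)
  fix a b
  have "\<forall>a b. \<exists>c. mem a c \<and> mem b c"
    using Z unfolding ZF_def by (elim conjE) assumption
  then obtain c where "mem a c" "mem b c"
    by blast
  moreover obtain d where
    "\<forall>w. mem w d \<longleftrightarrow> mem w c \<and> sat mem st ((\<lambda>_. a)(1 := b, 0 := w)) (FOr (FEq 0 1) (FEq 0 2))"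
    using ZF_separation[OF Z, of "FOr (FEq 0 1) (FEq 0 2)" c st "(\<lambda>_. a)(1 := b)" 0] by auto
  ultimately show "\<exists>d. \<forall>w. mem w d \<longleftrightarrow> w = a \<or> w = b"
    by auto
qed

lemma standard_separation:
  assumes Z: "ZF mem" and T: "Transfer mem st" and phi: "in_form phi"
    and params: "\<forall>y\<in>fv phi - {x}. st (e y)" and "st S"
  obtains P where "st P" and "\<And>t. mem t P \<longleftrightarrow> mem t S \<and> sat mem st (e(x := t)) phi"
proof -
  obtain s where s: "\<forall>y\<in>insert x (fv phi). y < s"
    using finite_nat_set_iff_bounded[of "insert x (fv phi)"] finite_fv by auto
  define p where "p = Suc s"
  define chi where "chi = FAll x (FIff (FMem x p) (FAnd (FMem x s) phi))"
  have chi: "sat mem st (e(s := S, p := b)) chi \<longleftrightarrow> (\<forall>t. mem t b \<longleftrightarrow> mem t S \<and> sat mem st (e(x := t)) phi)"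
    for b
  proof -
    have "sat mem st (e(s := S, p := b, x := t)) phi = sat mem st (e(x := t)) phi" for t
      using s by (intro sat_cong) (auto simp: p_def)
    moreover have "x \<noteq> p" "x \<noteq> s" "s \<noteq> p"
      using s by (auto simp: p_def)
    ultimately show ?thesis by (simp add: chi_def)
  qed
  obtain b where "\<forall>t. mem t b \<longleftrightarrow> mem t S \<and> sat mem st (e(x := t)) phi"
    using ZF_separation[OF Z phi] by blast
  then have "\<exists>b. sat mem st (e(s := S, p := b)) chi"
    using chi by blast
  moreover have "\<forall>y\<in>fv chi - {p}. st ((e(s := S)) y)"
    using params \<open>st S\<close> by (auto simp: chi_def)
  moreover have "in_form chi"
    using phi by (simp add: chi_def)
  ultimately obtain P where "st P" "sat mem st (e(s := S, p := P)) chi"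
    using Transfer_exists[OF T] by blast
  then show ?thesis
    using that chi by blast
qed

theorem lemma2p8:
  fixes mem :: "'a \<Rightarrow> 'a \<Rightarrow> bool" and st :: "'a \<Rightarrow> bool"
    and qs :: "(bool \<times> nat) list" and psi :: form and vs :: "nat list"
    and e :: "nat \<Rightarrow> 'a" and S :: 'a
  assumes "SPOT mem st"
    and "in_form psi"
    and "vs \<noteq> []" and "distinct vs"
    and "\<forall>x \<in> fv_pre qs psi - set vs. st (e x)"
    and "st S"
  shows "\<exists>P. st P \<and>
    (\<forall>vals. length vals = length vs \<longrightarrow> (\<forall>a\<in>set vals. st a) \<longrightarrow>
      ((\<exists>t. is_tuple mem t vals \<and> mem t P) \<longleftrightarrow>
       ((\<exists>t. is_tuple mem t vals \<and> mem t S) \<and> sat_pre mem st (env_upd e vs vals) qs psi)))"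
proof -
  have Z: "ZF mem" and T: "Transfer mem st"
    using assms(1) by (auto simp: SPOT_def)
  define th where "th = erase_st qs psi"
  obtain z phi where phi_in: "in_form phi = in_form th" and phi_fv: "fv phi \<subseteq> insert z (fv th - set vs)"
    and tuples: "\<And>e t. sat mem st (e(z := t)) phi \<longleftrightarrow>
      (\<exists>vals. length vals = length vs \<and> is_tuple mem t vals \<and> sat mem st (env_upd e vs vals) th)"
    by (rule ex_tuple_form[OF assms(4), of th mem st]) blast
  have "in_form phi"
    using phi_in in_form_erase_st[OF assms(2)] by (simp add: th_def)
  moreover have "\<forall>y\<in>fv phi - {z}. st (e y)"
    using phi_fv assms(5) by (auto simp: th_def fv_erase_st)
  ultimately obtain P where "st P" and P: "\<And>t. mem t P \<longleftrightarrow> mem t S \<and> sat mem st (e(z := t)) phi"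
    using standard_separation[OF Z T _ _ assms(6)] by blast
  have inj: "is_tuple mem t xs \<Longrightarrow> is_tuple mem t ys \<Longrightarrow> length xs = length ys \<Longrightarrow> xs = ys" for t xs ys
    by (rule is_tuple_inj[OF ZF_has_upairs[OF Z]])
  have "(\<exists>t. is_tuple mem t vals \<and> mem t P) \<longleftrightarrow>
      (\<exists>t. is_tuple mem t vals \<and> mem t S) \<and> sat mem st (env_upd e vs vals) th"
    if len: "length vals = length vs" for vals
    using P tuples[of e] inj[of _ vals] len by (metis (no_types, lifting))
  moreover have "sat_pre mem st (env_upd e vs vals) qs psi = sat mem st (env_upd e vs vals) th"
    if "length vals = length vs" and "\<forall>a\<in>set vals. st a" for vals
    unfolding th_def using T assms(2) st_env_upd[OF assms(5) that(2,1)]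
    by (rule sat_pre_eq_sat_erase_st)
  ultimately show ?thesis
    using \<open>st P\<close> by (intro exI[of _ P]) simp
qed

end
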